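(* Let $\Lambda\in(\mathbb{R}\setminus\{0\})^n$, let $\mathcal{X}$ be as in the context and $P\in\mathrm{Lip}_{\mathcal{X}}(\mathbb{C}^n,\mathbb{C}^n)$. Then for every $a\in\mathbb{C}^n$ the limit $\langle\langle P\rangle\rangle(a)=\lim_{T\to\pm\infty}\langle\langle P\rangle\rangle^T(a)$ exists, and $\langle\langle P\rangle\rangle\in\mathrm{Lip}_{\mathcal{X}}(\mathbb{C}^n,\mathbb{C}^n)$. Moreover, for every $R>0$ the convergence is uniform in $a\in\bar B_R$, i.e. the rate of convergence depends only on $R$, $\Lambda$ and $P$.
   Context: $\mathbb{C}^n\cong\mathbb{R}^{2n}$ with Euclidean norm; $B_R=\{v:|v|<R\}$, $\bar B_R$ its closure. For a non-decreasing continuous function $\mathcal{X}:\mathbb{R}_+\to\mathbb{R}_+$, $\mathrm{Lip}_{\mathcal{X}}(\mathbb{C}^n,\mathbb{C}^n)$ is the set of continuous vector fields $f:\mathbb{C}^n\to\mathbb{C}^n$ with $\sup_{B_R}|f|\le\mathcal{X}(R)$ and $\mathrm{Lip}(f|_{B_R})\le\mathcal{X}(R)$ for all $R\ge0$. For $w\in\mathbb{R}^n$, $\Phi_w=\mathrm{diag}(e^{\mathbf{i}w_1},\dots,e^{\mathbf{i}w_n})$. For $T\ne0$, $\langle\langle P\rangle\rangle^T(a)=\frac{1}{|T|}\int_0^T\Phi_{\Lambda t}P(\Phi_{-\Lambda t}a)\,dt$ (for $T<0$, $\int_0^T$ means $\int_T^0$). *)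

theory Defs
  imports "HOL-Analysis.Analysis"
begin

text \<open>C^n is modelled as complex ^ 'n (Euclidean norm).
  Phi w = diag(exp(i w_1), ..., exp(i w_n)).\<close>
definition Phi :: "real^'n \<Rightarrow> complex^'n \<Rightarrow> complex^'n" where
  "Phi w a = (\<chi> i. exp (\<i> * complex_of_real (w $ i)) * a $ i)"

definition avgT :: "real^'n \<Rightarrow> (complex^'n \<Rightarrow> complex^'n) \<Rightarrow> real \<Rightarrow> complex^'n \<Rightarrow> complex^'n" where
  "avgT \<Lambda> P T a = (1 / \<bar>T\<bar>) *\<^sub>R
     integral {min 0 T..max 0 T} (\<lambda>t. Phi (t *\<^sub>R \<Lambda>) (P (Phi (- (t *\<^sub>R \<Lambda>)) a)))"

definition LipX :: "(real \<Rightarrow> real) \<Rightarrow> (complex^'n \<Rightarrow> complex^'n) set" where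
  "LipX X = {f. continuous_on UNIV f \<and>
     (\<forall>R\<ge>0. (\<forall>v\<in>ball 0 R. norm (f v) \<le> X R) \<and> lipschitz_on (X R) (ball 0 R) f)}"

end

theory Submission
  imports Defs
begin

text \<open>Uniformly on bounded sets, P is approximated by a polynomial g (Stone--Weierstrass).
  Along the flow t \<mapsto> Phi(-t\<Lambda>) a, every coordinate of g, and hence every coordinate
  of the conjugated field, is a trigonometric polynomial in t with coefficients continuous in a;
  the time averages of such a polynomial converge to its constant term, uniformly for a in
  compact sets. Since Phi is an isometry, averaging moves P and g by at most their uniform
  distance, so the averages of P are uniformly Cauchy as |T| \<rightarrow> \<infinity>. The bounds and
  Lipschitz constants of P are inherited by every average and then by the limit.\<close>

lemma Phi_nth [simp]: "Phi w a $ i = exp (\<i> * complex_of_real (w $ i)) * a $ i"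
  by (simp add: Phi_def)

lemma norm_Phi [simp]: "norm (Phi w a) = norm a"
  unfolding norm_vec_def by (simp add: norm_mult norm_exp_i_times)

lemma Phi_diff: "Phi w a - Phi w b = Phi w (a - b)"
  by (simp add: vec_eq_iff algebra_simps)

lemma Phi_zero [simp]: "Phi w 0 = 0"
  by (simp add: vec_eq_iff)

lemma continuous_on_conjugated_flow:
  assumes "continuous_on UNIV g"
  shows "continuous_on UNIV (\<lambda>t. Phi (t *\<^sub>R \<Lambda>) (g (Phi (- (t *\<^sub>R \<Lambda>)) a)))"
proof -
  have "continuous_on UNIV (\<lambda>t. Phi (- (t *\<^sub>R \<Lambda>)) a)"
    unfolding Phi_def by (intro continuous_on_vec_lambda continuous_intros continuous_on_component)
  then have "continuous_on UNIV (\<lambda>t. g (Phi (- (t *\<^sub>R \<Lambda>)) a))"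
    by (rule continuous_on_compose2[OF assms]) auto
  then show ?thesis
    unfolding Phi_def[of "_ *\<^sub>R \<Lambda>"]
    by (intro continuous_on_vec_lambda continuous_intros continuous_on_component)
qed

lemma norm_avgT_diff_le:
  fixes P Q :: "complex^'n \<Rightarrow> complex^'n"
  assumes "continuous_on UNIV P" "continuous_on UNIV Q" "T \<noteq> 0"
    and "\<And>t. norm (P (Phi (- (t *\<^sub>R \<Lambda>)) u) - Q (Phi (- (t *\<^sub>R \<Lambda>)) v)) \<le> B"
  shows "norm (avgT \<Lambda> P T u - avgT \<Lambda> Q T v) \<le> B"
proof -
  let ?I = "{min 0 T..max 0 T}"
  let ?f = "\<lambda>t. Phi (t *\<^sub>R \<Lambda>) (P (Phi (- (t *\<^sub>R \<Lambda>)) u))"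
  let ?h = "\<lambda>t. Phi (t *\<^sub>R \<Lambda>) (Q (Phi (- (t *\<^sub>R \<Lambda>)) v))"
  have cont: "continuous_on ?I ?f" "continuous_on ?I ?h"
    by (intro continuous_on_subset[OF continuous_on_conjugated_flow] assms(1,2); simp)+
  have "avgT \<Lambda> P T u - avgT \<Lambda> Q T v = (1 / \<bar>T\<bar>) *\<^sub>R integral ?I (\<lambda>t. ?f t - ?h t)"
    using cont by (simp add: avgT_def integral_diff integrable_continuous_interval scaleR_diff_right)
  moreover have "norm (integral ?I (\<lambda>t. ?f t - ?h t)) \<le> B * \<bar>T\<bar>"
  proof -
    have "norm (integral ?I (\<lambda>t. ?f t - ?h t)) \<le> B * (max 0 T - min 0 T)"
      using assms(4) by (intro integral_bound continuous_on_diff cont) (auto simp: Phi_diff)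
    then show ?thesis by (simp add: max_def min_def split: if_splits)
  qed
  ultimately show ?thesis
    using assms(3) by (simp add: divide_le_eq mult.commute)
qed

lemma LipXI:
  assumes "\<And>R v. R \<ge> 0 \<Longrightarrow> v \<in> ball 0 R \<Longrightarrow> norm (f v) \<le> X R"
    and lip: "\<And>R. R \<ge> 0 \<Longrightarrow> lipschitz_on (X R) (ball 0 R) f"
  shows "f \<in> LipX X"
proof -
  have "isCont f x" for x
  proof -
    have "continuous_on (ball 0 (norm x + 1)) f"
      by (rule lipschitz_on_continuous_on[OF lip]) (simp add: add_nonneg_pos)
    then show ?thesis
      by (simp add: continuous_on_eq_continuous_at)
  qed
  then show ?thesis
    using assms unfolding LipX_def by (simp add: continuous_at_imp_continuous_on)
qed

lemma avgT_LipX: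
  fixes P :: "complex^'n \<Rightarrow> complex^'n"
  assumes "P \<in> LipX X" "T \<noteq> 0"
  shows "avgT \<Lambda> P T \<in> LipX X"
proof (rule LipXI)
  have cP: "continuous_on UNIV P" using assms(1) by (simp add: LipX_def)
  fix R :: real assume R: "R \<ge> 0"
  have bound: "\<And>v. v \<in> ball 0 R \<Longrightarrow> norm (P v) \<le> X R"
    and lip: "lipschitz_on (X R) (ball 0 R) P"
    using assms(1) R by (auto simp: LipX_def)
  show "norm (avgT \<Lambda> P T v) \<le> X R" if "v \<in> ball 0 R" for v
    using norm_avgT_diff_le[OF cP continuous_on_const assms(2), of \<Lambda> v 0 "X R"] bound that
    by (simp add: avgT_def)
  show "lipschitz_on (X R) (ball 0 R) (avgT \<Lambda> P T)"
  proof (rule lipschitz_onI)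
    show "0 \<le> X R" using lip by (rule lipschitz_on_nonneg)
    fix u v :: "complex^'n" assume uv: "u \<in> ball 0 R" "v \<in> ball 0 R"
    have "norm (P (Phi w u) - P (Phi w v)) \<le> X R * dist u v" for w
      using lipschitz_onD[OF lip, of "Phi w u" "Phi w v"] uv by (simp add: dist_norm Phi_diff)
    from norm_avgT_diff_le[OF cP cP assms(2), of \<Lambda> u v, OF this]
    show "dist (avgT \<Lambda> P T u) (avgT \<Lambda> P T v) \<le> X R * dist u v"
      by (simp add: dist_norm)
  qed
qed

lemma LipX_tendsto:
  fixes f :: "'b \<Rightarrow> complex^'n \<Rightarrow> complex^'n"
  assumes "F \<noteq> bot" "\<forall>\<^sub>F T in F. f T \<in> LipX X" "\<And>a. ((\<lambda>T. f T a) \<longlongrightarrow> g a) F"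
  shows "g \<in> LipX X"
proof (rule LipXI)
  fix R :: real assume R: "R \<ge> 0"
  show "norm (g v) \<le> X R" if "v \<in> ball 0 R" for v
  proof (rule tendsto_upperbound[OF tendsto_norm[OF assms(3)] _ assms(1)])
    show "\<forall>\<^sub>F T in F. norm (f T v) \<le> X R"
      using assms(2) by eventually_elim (use R that in \<open>simp add: LipX_def\<close>)
  qed
  have lip: "\<forall>\<^sub>F T in F. lipschitz_on (X R) (ball 0 R) (f T)"
    using assms(2) by eventually_elim (use R in \<open>simp add: LipX_def\<close>)
  show "lipschitz_on (X R) (ball 0 R) g"
  proof (rule lipschitz_onI)
    show "0 \<le> X R"
      using eventually_happens'[OF assms(1) lip] lipschitz_on_nonneg by blast
    fix u v :: "complex^'n" assume uv: "u \<in> ball 0 R" "v \<in> ball 0 R"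
    show "dist (g u) (g v) \<le> X R * dist u v"
    proof (rule tendsto_upperbound[OF tendsto_dist[OF assms(3) assms(3)] _ assms(1)])
      show "\<forall>\<^sub>F T in F. dist (f T u) (f T v) \<le> X R * dist u v"
        using lip by eventually_elim (use uv in \<open>auto dest: lipschitz_onD\<close>)
    qed
  qed
qed

subsection \<open>Time averages of trigonometric polynomials\<close>

inductive trig_poly :: "('a::topological_space \<Rightarrow> real \<Rightarrow> complex) \<Rightarrow> bool" where
  monomial: "continuous_on UNIV c \<Longrightarrow> trig_poly (\<lambda>a t. c a * exp (\<i> * complex_of_real (\<omega> * t)))"
| add: "trig_poly F \<Longrightarrow> trig_poly G \<Longrightarrow> trig_poly (\<lambda>a t. F a t + G a t)"

lemma trig_poly_const: "continuous_on UNIV c \<Longrightarrow> trig_poly (\<lambda>a t. c a)"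
  using trig_poly.monomial[of c 0] by simp

lemma trig_poly_monomial_mult:
  assumes "trig_poly G" "continuous_on UNIV c"
  shows "trig_poly (\<lambda>a t. (c a * exp (\<i> * complex_of_real (\<omega> * t))) * G a t)"
  using assms(1)
proof induction
  case (monomial d \<omega>')
  have "trig_poly (\<lambda>a t. (c a * d a) * exp (\<i> * complex_of_real ((\<omega> + \<omega>') * t)))"
    by (intro trig_poly.monomial continuous_intros assms(2) monomial)
  then show ?case
    by (simp add: algebra_simps exp_add[symmetric])
next
  case (add F G)
  then show ?case using trig_poly.add[OF add.IH] by (simp add: distrib_left)
qed

lemma trig_poly_mult:
  assumes "trig_poly F" "trig_poly G"
  shows "trig_poly (\<lambda>a t. F a t * G a t)"
  using assms(1)
proof induction
  case (monomial c \<omega>)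
  then show ?case using trig_poly_monomial_mult[OF assms(2)] by simp
next
  case (add F1 F2)
  then show ?case using trig_poly.add[OF add.IH] by (simp add: distrib_right)
qed

lemma trig_poly_sum:
  "finite I \<Longrightarrow> (\<And>i. i \<in> I \<Longrightarrow> trig_poly (F i)) \<Longrightarrow> trig_poly (\<lambda>a t. \<Sum>i\<in>I. F i a t)"
proof (induction I rule: finite_induct)
  case empty
  then show ?case using trig_poly_const[of "\<lambda>_. 0"] by simp
next
  case (insert i I)
  then show ?case using trig_poly.add[of "F i" "\<lambda>a t. \<Sum>i\<in>I. F i a t"] by simp
qed

lemma trig_poly_continuous: "trig_poly F \<Longrightarrow> continuous_on UNIV (F a)"
  by (induction rule: trig_poly.induct) (auto intro!: continuous_intros)

definition time_average :: "('a \<Rightarrow> real \<Rightarrow> complex) \<Rightarrow> real \<Rightarrow> 'a \<Rightarrow> complex" where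
  "time_average F T a = (1 / \<bar>T\<bar>) *\<^sub>R integral {min 0 T..max 0 T} (F a)"

lemma time_average_add:
  assumes "continuous_on UNIV (F a)" "continuous_on UNIV (G a)"
  shows "time_average (\<lambda>a t. F a t + G a t) T a = time_average F T a + time_average G T a"
  using assms unfolding time_average_def
  by (subst integral_add)
     (auto intro!: integrable_continuous_interval intro: continuous_on_subset simp: scaleR_add_right)

lemma norm_integral_exp_le:
  assumes "u \<le> v" "\<omega> \<noteq> 0"
  shows "norm (integral {u..v} (\<lambda>t. exp (\<i> * complex_of_real (\<omega> * t)))) \<le> 2 / \<bar>\<omega>\<bar>"
proof -
  define f where "f t = exp (\<i> * complex_of_real (\<omega> * t)) / (\<i> * complex_of_real \<omega>)" for t
  have "(f has_vector_derivative exp (\<i> * complex_of_real (\<omega> * t))) (at t within {u..v})" for t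
  proof -
    have "((\<lambda>z. exp (\<i> * complex_of_real \<omega> * z) / (\<i> * complex_of_real \<omega>)) has_field_derivative
         exp (\<i> * complex_of_real \<omega> * of_real t)) (at (of_real t))"
      using assms(2) by (auto intro!: derivative_eq_intros)
    from has_vector_derivative_real_field[OF this]
    show ?thesis unfolding f_def by (simp add: mult.assoc)
  qed
  then have "((\<lambda>t. exp (\<i> * complex_of_real (\<omega> * t))) has_integral f v - f u) {u..v}"
    by (intro fundamental_theorem_of_calculus[OF assms(1)]) auto
  then have "integral {u..v} (\<lambda>t. exp (\<i> * complex_of_real (\<omega> * t))) = f v - f u"
    by (rule integral_unique)
  also have "norm (f v - f u) \<le> norm (f v) + norm (f u)"
    by (rule norm_triangle_ineq4)
  also have "norm (f v) + norm (f u) = 2 / \<bar>\<omega>\<bar>"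
    unfolding f_def by (simp add: norm_divide norm_mult norm_exp_i_times)
  finally show ?thesis .
qed

lemma norm_time_average_monomial_le:
  assumes "\<omega> \<noteq> 0"
  shows "norm (time_average (\<lambda>a t. c a * exp (\<i> * complex_of_real (\<omega> * t))) T a)
           \<le> norm (c a) * (2 / \<bar>\<omega>\<bar>) / \<bar>T\<bar>"
proof -
  have "norm (time_average (\<lambda>a t. c a * exp (\<i> * complex_of_real (\<omega> * t))) T a)
      = norm (c a) * norm (integral {min 0 T..max 0 T} (\<lambda>t. exp (\<i> * complex_of_real (\<omega> * t)))) / \<bar>T\<bar>"
    by (simp add: time_average_def norm_mult)
  also have "\<dots> \<le> norm (c a) * (2 / \<bar>\<omega>\<bar>) / \<bar>T\<bar>"
    using norm_integral_exp_le[of "min 0 T" "max 0 T" \<omega>] assms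
    by (intro divide_right_mono mult_left_mono) auto
  finally show ?thesis .
qed

lemma uniform_limit_time_average_monomial:
  assumes "continuous_on UNIV c" "compact K"
  shows "uniform_limit K (time_average (\<lambda>a t. c a * exp (\<i> * complex_of_real (\<omega> * t))))
           (\<lambda>a. if \<omega> = 0 then c a else 0) at_infinity"
proof (cases "\<omega> = 0")
  case True
  have "time_average (\<lambda>a t. c a * exp (\<i> * complex_of_real (\<omega> * t))) T a = c a" if "T \<noteq> 0" for T a
    using True that by (simp add: time_average_def content_real max_def min_def)
  then show ?thesis
    using True by (intro uniform_limitI eventually_at_infinityI[of 1]) auto
next
  case False
  obtain B where B: "B > 0" "\<And>a. a \<in> K \<Longrightarrow> norm (c a) \<le> B"
    using compact_imp_bounded[OF compact_continuous_image[OF continuous_on_subset[OF assms(1)] assms(2)]]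
    by (auto simp: bounded_pos)
  show ?thesis
  proof (rule uniform_limitI)
    fix e :: real assume e: "e > 0"
    show "\<forall>\<^sub>F T in at_infinity. \<forall>a\<in>K.
            dist (time_average (\<lambda>a t. c a * exp (\<i> * complex_of_real (\<omega> * t))) T a)
                 (if \<omega> = 0 then c a else 0) < e"
    proof (rule eventually_at_infinityI[of "2 * B / (\<bar>\<omega>\<bar> * e) + 1"], intro ballI)
      fix T :: real and a assume T: "2 * B / (\<bar>\<omega>\<bar> * e) + 1 \<le> norm T" and a: "a \<in> K"
      have T_large: "2 * B / (\<bar>\<omega>\<bar> * e) < \<bar>T\<bar>" and "0 \<le> 2 * B / (\<bar>\<omega>\<bar> * e)"
        using T B e by auto
      then have T_pos: "\<bar>T\<bar> > 0"
        by linarith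
      have "2 * B < \<bar>T\<bar> * (\<bar>\<omega>\<bar> * e)"
        using T_large False e by (simp add: pos_divide_less_eq)
      then have "B * (2 / \<bar>\<omega>\<bar>) / \<bar>T\<bar> < e"
        using T_pos False by (simp add: pos_divide_less_eq mult.commute mult.left_commute)
      moreover have "norm (c a) * (2 / \<bar>\<omega>\<bar>) / \<bar>T\<bar> \<le> B * (2 / \<bar>\<omega>\<bar>) / \<bar>T\<bar>"
        using B(2)[OF a] by (intro divide_right_mono mult_right_mono) auto
      ultimately show "dist (time_average (\<lambda>a t. c a * exp (\<i> * complex_of_real (\<omega> * t))) T a)
                 (if \<omega> = 0 then c a else 0) < e"
        using norm_time_average_monomial_le[OF False, of c T a] False by (simp add: dist_norm)
    qed
  qed
qed

lemma trig_poly_time_average_uniform_limit: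
  assumes "trig_poly F"
  shows "\<exists>L. \<forall>K. compact K \<longrightarrow> uniform_limit K (time_average F) L at_infinity"
  using assms
proof induction
  case (monomial c \<omega>)
  then show ?case using uniform_limit_time_average_monomial by blast
next
  case (add F G)
  then obtain LF LG where
    "\<And>K. compact K \<Longrightarrow> uniform_limit K (time_average F) LF at_infinity"
    "\<And>K. compact K \<Longrightarrow> uniform_limit K (time_average G) LG at_infinity"
    by blast
  moreover have "time_average (\<lambda>a t. F a t + G a t) = (\<lambda>T a. time_average F T a + time_average G T a)"
    by (simp add: fun_eq_iff time_average_add trig_poly_continuous add.hyps)
  ultimately have "uniform_limit K (time_average (\<lambda>a t. F a t + G a t)) (\<lambda>a. LF a + LG a) at_infinity"
    if "compact K" for K
    using that by (simp add: uniform_limit_add)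
  then show ?case by blast
qed

subsection \<open>Averages of polynomial fields\<close>

lemma real_linear_eq_sum_coordinates:
  assumes "bounded_linear f"
  shows "f (v::complex^'n) = (\<Sum>k\<in>UNIV. Re (v$k) * f (axis k 1) + Im (v$k) * f (axis k \<i>))"
proof -
  have "v = (\<Sum>k\<in>UNIV. Re (v$k) *\<^sub>R axis k 1 + Im (v$k) *\<^sub>R axis k \<i>)"
    by (simp add: vec_eq_iff axis_def complex_eq_iff if_distrib cong: if_cong)
  then have "f v = f (\<Sum>k\<in>UNIV. Re (v$k) *\<^sub>R axis k 1 + Im (v$k) *\<^sub>R axis k \<i>)"
    by simp
  also have "\<dots> = (\<Sum>k\<in>UNIV. Re (v$k) * f (axis k 1) + Im (v$k) * f (axis k \<i>))"
    using assms by (simp add: linear_sum bounded_linear.linear linear_add linear_scale)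
  finally show ?thesis .
qed

lemma of_real_Re_rotation:
  "complex_of_real (Re (exp (\<i> * complex_of_real (- (t * l))) * z)) =
     (z / 2) * exp (\<i> * complex_of_real ((- l) * t)) + (cnj z / 2) * exp (\<i> * complex_of_real (l * t))"
  unfolding cis_conv_exp[symmetric]
  by (simp add: complex_eq_iff algebra_simps cos_minus sin_minus field_simps)

lemma of_real_Im_rotation:
  "complex_of_real (Im (exp (\<i> * complex_of_real (- (t * l))) * z)) =
     (- \<i> * z / 2) * exp (\<i> * complex_of_real ((- l) * t)) + (\<i> * cnj z / 2) * exp (\<i> * complex_of_real (l * t))"
  unfolding cis_conv_exp[symmetric]
  by (simp add: complex_eq_iff algebra_simps cos_minus sin_minus field_simps)

lemma trig_poly_rotated_linear:
  fixes \<Lambda> :: "real^'n"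
  assumes "bounded_linear f"
  shows "trig_poly (\<lambda>(a::complex^'n) t. complex_of_real (f (Phi (- (t *\<^sub>R \<Lambda>)) a)))"
proof -
  have "trig_poly (\<lambda>(a::complex^'n) t. complex_of_real (Re (Phi (- (t *\<^sub>R \<Lambda>)) a $ k)))" for k
    unfolding Phi_nth vector_uminus_component vector_scaleR_component real_scaleR_def of_real_Re_rotation
    by (intro trig_poly.add trig_poly.monomial continuous_intros continuous_on_component) auto
  moreover have "trig_poly (\<lambda>(a::complex^'n) t. complex_of_real (Im (Phi (- (t *\<^sub>R \<Lambda>)) a $ k)))" for k
    unfolding Phi_nth vector_uminus_component vector_scaleR_component real_scaleR_def of_real_Im_rotation
    by (intro trig_poly.add trig_poly.monomial continuous_intros continuous_on_component) auto
  ultimately have "trig_poly (\<lambda>(a::complex^'n) t. \<Sum>k\<in>UNIV.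
      complex_of_real (Re (Phi (- (t *\<^sub>R \<Lambda>)) a $ k)) * complex_of_real (f (axis k 1)) +
      complex_of_real (Im (Phi (- (t *\<^sub>R \<Lambda>)) a $ k)) * complex_of_real (f (axis k \<i>)))"
    by (intro trig_poly_sum trig_poly.add trig_poly_mult trig_poly_const continuous_on_const) auto
  then show ?thesis
    by (subst real_linear_eq_sum_coordinates[OF assms]) simp
qed

lemma trig_poly_rotated_polynomial:
  fixes \<Lambda> :: "real^'n"
  assumes "real_polynomial_function f"
  shows "trig_poly (\<lambda>(a::complex^'n) t. complex_of_real (f (Phi (- (t *\<^sub>R \<Lambda>)) a)))"
  using assms
proof induction
  case (linear f)
  then show ?case by (rule trig_poly_rotated_linear)
next
  case (const c)
  then show ?case using trig_poly_const[of "\<lambda>_. complex_of_real c"] by simp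
next
  case (add f g)
  show ?case unfolding of_real_add by (rule trig_poly.add[OF add.IH])
next
  case (mult f g)
  show ?case unfolding of_real_mult by (rule trig_poly_mult[OF mult.IH])
qed

lemma avgT_nth:
  fixes g :: "complex^'n \<Rightarrow> complex^'n"
  assumes "continuous_on UNIV g"
  shows "avgT \<Lambda> g T a $ j =
    time_average (\<lambda>a t. exp (\<i> * complex_of_real (t * \<Lambda> $ j)) * g (Phi (- (t *\<^sub>R \<Lambda>)) a) $ j) T a"
proof -
  have "(\<lambda>t. Phi (t *\<^sub>R \<Lambda>) (g (Phi (- (t *\<^sub>R \<Lambda>)) a))) integrable_on {min 0 T..max 0 T}"
    by (intro integrable_continuous_interval continuous_on_subset[OF continuous_on_conjugated_flow[OF assms]])
       auto
  from integral_linear[OF this bounded_linear_vec_nth[of j], unfolded o_def]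
  show ?thesis
    by (simp add: avgT_def time_average_def)
qed

lemma trig_poly_conjugated_polynomial_nth:
  fixes g :: "complex^'n \<Rightarrow> complex^'n"
  assumes "polynomial_function g"
  shows "trig_poly (\<lambda>a t. exp (\<i> * complex_of_real (t * \<Lambda> $ j)) * g (Phi (- (t *\<^sub>R \<Lambda>)) a) $ j)"
proof -
  have "real_polynomial_function ((\<lambda>z. Re (z $ j)) \<circ> g)" "real_polynomial_function ((\<lambda>z. Im (z $ j)) \<circ> g)"
    by (intro real_polynomial_function_compose[OF assms] real_polynomial_function.intros(1)
          bounded_linear_compose[OF bounded_linear_Re bounded_linear_vec_nth]
          bounded_linear_compose[OF bounded_linear_Im bounded_linear_vec_nth])+
  then have "trig_poly (\<lambda>a t. (1 * exp (\<i> * complex_of_real (\<Lambda> $ j * t))) *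
      (complex_of_real (Re (g (Phi (- (t *\<^sub>R \<Lambda>)) a) $ j)) +
       \<i> * complex_of_real (Im (g (Phi (- (t *\<^sub>R \<Lambda>)) a) $ j))))"
    by (intro trig_poly_mult trig_poly.monomial trig_poly.add trig_poly_const continuous_on_const
          trig_poly_rotated_polynomial[unfolded o_def]) (simp_all add: o_def)
  then show ?thesis
    by (simp only: mult_1 complex_eq[symmetric] mult.commute[of "\<Lambda> $ j"])
qed

lemma uniform_limit_vec_lambda:
  fixes f :: "'a \<Rightarrow> 'b \<Rightarrow> 'c::real_normed_vector^'n"
  assumes "\<And>j. uniform_limit S (\<lambda>x y. f x y $ j) (\<lambda>y. l y $ j) F"
  shows "uniform_limit S f l F"
proof (rule uniform_limitI)
  fix e :: real assume "e > 0"
  then have "\<forall>\<^sub>F x in F. \<forall>j. \<forall>y\<in>S. dist (f x y $ j) (l y $ j) < e / CARD('n)"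
    by (intro eventually_all_finite uniform_limitD[OF assms]) simp
  then show "\<forall>\<^sub>F x in F. \<forall>y\<in>S. dist (f x y) (l y) < e"
  proof eventually_elim
    case (elim x)
    show ?case
    proof
      fix y assume "y \<in> S"
      have "dist (f x y) (l y) \<le> (\<Sum>j\<in>UNIV. dist (f x y $ j) (l y $ j))"
        unfolding dist_vec_def by (rule L2_set_le_sum) simp
      also have "\<dots> < (\<Sum>j\<in>(UNIV::'n set). e / CARD('n))"
        using elim \<open>y \<in> S\<close> by (intro sum_strict_mono) auto
      also have "\<dots> = e"
        by simp
      finally show "dist (f x y) (l y) < e" .
    qed
  qed
qed

lemma avgT_polynomial_uniform_limit:
  fixes g :: "complex^'n \<Rightarrow> complex^'n"
  assumes "polynomial_function g"
  shows "\<exists>L. \<forall>K. compact K \<longrightarrow> uniform_limit K (avgT \<Lambda> g) L at_infinity"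
proof -
  define F where "F j = (\<lambda>a t. exp (\<i> * complex_of_real (t * \<Lambda> $ j)) * g (Phi (- (t *\<^sub>R \<Lambda>)) a) $ j)"
    for j
  have "\<forall>j. \<exists>L. \<forall>K. compact K \<longrightarrow> uniform_limit K (time_average (F j)) L at_infinity"
    unfolding F_def
    using trig_poly_time_average_uniform_limit[OF trig_poly_conjugated_polynomial_nth[OF assms]]
    by blast
  from choice[OF this] obtain L
    where L: "\<forall>j K. compact K \<longrightarrow> uniform_limit K (time_average (F j)) (L j) at_infinity"
    by blast
  have "(\<lambda>T a. avgT \<Lambda> g T a $ j) = time_average (F j)" for j
    by (simp add: fun_eq_iff F_def avgT_nth[OF continuous_on_polymonial_function[OF assms]])
  then have "uniform_limit K (avgT \<Lambda> g) (\<lambda>a. \<chi> j. L j a) at_infinity" if "compact K" for K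
    using L that by (intro uniform_limit_vec_lambda) simp
  then show ?thesis
    by blast
qed

lemma uniform_limit_at_infinity_if_Cauchy:
  fixes f :: "real \<Rightarrow> 'a \<Rightarrow> 'b::complete_space"
  assumes Cauchy: "\<And>e. e > 0 \<Longrightarrow> \<exists>r. \<forall>x\<in>S. \<forall>T U. r \<le> \<bar>T\<bar> \<longrightarrow> r \<le> \<bar>U\<bar> \<longrightarrow> dist (f T x) (f U x) \<le> e"
  shows "uniform_limit S f (\<lambda>x. lim (\<lambda>n. f (real n) x)) at_infinity"
proof (rule uniform_limitI)
  have conv: "(\<lambda>n. f (real n) x) \<longlonglongrightarrow> lim (\<lambda>n. f (real n) x)" if "x \<in> S" for x
  proof -
    have "Cauchy (\<lambda>n. f (real n) x)"
    proof (rule metric_CauchyI)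
      fix e :: real assume "e > 0"
      then obtain r where r: "\<forall>T U. r \<le> \<bar>T\<bar> \<longrightarrow> r \<le> \<bar>U\<bar> \<longrightarrow> dist (f T x) (f U x) \<le> e / 2"
        using Cauchy[of "e / 2"] \<open>x \<in> S\<close> by auto
      have "dist (f (real m) x) (f (real n) x) < e" if "nat \<lceil>r\<rceil> \<le> m" "nat \<lceil>r\<rceil> \<le> n" for m n
      proof -
        have "r \<le> \<bar>real m\<bar>" "r \<le> \<bar>real n\<bar>"
          using that by linarith+
        with r have "dist (f (real m) x) (f (real n) x) \<le> e / 2"
          by blast
        with \<open>e > 0\<close> show ?thesis
          by linarith
      qed
      then show "\<exists>M. \<forall>m\<ge>M. \<forall>n\<ge>M. dist (f (real m) x) (f (real n) x) < e"
        by blast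
    qed
    then show ?thesis
      by (simp add: Cauchy_convergent_iff convergent_LIMSEQ_iff)
  qed
  fix e :: real assume "e > 0"
  then obtain r where r: "\<forall>x\<in>S. \<forall>T U. r \<le> \<bar>T\<bar> \<longrightarrow> r \<le> \<bar>U\<bar> \<longrightarrow> dist (f T x) (f U x) \<le> e / 2"
    using Cauchy[of "e / 2"] by auto
  show "\<forall>\<^sub>F T in at_infinity. \<forall>x\<in>S. dist (f T x) (lim (\<lambda>n. f (real n) x)) < e"
  proof (rule eventually_at_infinityI, intro ballI)
    fix T :: real and x assume T: "r \<le> norm T" and x: "x \<in> S"
    have "\<forall>\<^sub>F n in sequentially. dist (f T x) (f (real n) x) \<le> e / 2"
      using r x T by (intro eventually_sequentiallyI[of "nat \<lceil>r\<rceil>"]) (auto simp: nat_ceiling_le_eq)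
    then have "dist (f T x) (lim (\<lambda>n. f (real n) x)) \<le> e / 2"
      by (intro tendsto_upperbound[OF tendsto_dist[OF tendsto_const conv[OF x]]]) auto
    then show "dist (f T x) (lim (\<lambda>n. f (real n) x)) < e"
      using \<open>e > 0\<close> by linarith
  qed
qed

lemma avgT_uniformly_Cauchy:
  fixes P :: "complex^'n \<Rightarrow> complex^'n"
  assumes cP: "continuous_on UNIV P" and "e > 0"
  shows "\<exists>r. \<forall>a\<in>cball 0 R. \<forall>T U. r \<le> \<bar>T\<bar> \<longrightarrow> r \<le> \<bar>U\<bar> \<longrightarrow>
           dist (avgT \<Lambda> P T a) (avgT \<Lambda> P U a) \<le> e"
proof -
  obtain g where g: "polynomial_function g" "\<And>x. x \<in> cball 0 R \<Longrightarrow> norm (P x - g x) < e / 4"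
    using Stone_Weierstrass_polynomial_function[of "cball 0 R" P "e / 4"] \<open>e > 0\<close>
      continuous_on_subset[OF cP] by auto
  have cg: "continuous_on UNIV g"
    by (rule continuous_on_polymonial_function[OF g(1)])
  obtain L where "uniform_limit (cball 0 R) (avgT \<Lambda> g) L at_infinity"
    using avgT_polynomial_uniform_limit[OF g(1), of \<Lambda>] compact_cball by blast
  then have "\<forall>\<^sub>F T in at_infinity. \<forall>a\<in>cball 0 R. dist (avgT \<Lambda> g T a) (L a) < e / 4"
    by (rule uniform_limitD) (use \<open>e > 0\<close> in simp)
  then obtain r where r: "\<And>T a. r \<le> \<bar>T\<bar> \<Longrightarrow> a \<in> cball 0 R \<Longrightarrow> dist (avgT \<Lambda> g T a) (L a) < e / 4"
    unfolding eventually_at_infinity real_norm_def by blast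
  have approx: "dist (avgT \<Lambda> P T a) (avgT \<Lambda> g T a) \<le> e / 4" if "a \<in> cball 0 R" "T \<noteq> 0" for a T
    unfolding dist_norm
  proof (rule norm_avgT_diff_le[OF cP cg that(2)])
    show "norm (P (Phi (- (t *\<^sub>R \<Lambda>)) a) - g (Phi (- (t *\<^sub>R \<Lambda>)) a)) \<le> e / 4" for t
      using g(2)[of "Phi (- (t *\<^sub>R \<Lambda>)) a"] that(1) by simp
  qed
  show ?thesis
  proof (intro exI[of _ "max r 1"] ballI allI impI)
    fix a :: "complex^'n" and T U :: real
    assume a: "a \<in> cball 0 R" and T: "max r 1 \<le> \<bar>T\<bar>" and U: "max r 1 \<le> \<bar>U\<bar>"
    have "T \<noteq> 0" "U \<noteq> 0" "r \<le> \<bar>T\<bar>" "r \<le> \<bar>U\<bar>"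
      using T U by auto
    then have "dist (avgT \<Lambda> P T a) (avgT \<Lambda> g T a) \<le> e / 4" "dist (avgT \<Lambda> g T a) (L a) < e / 4"
      "dist (avgT \<Lambda> P U a) (avgT \<Lambda> g U a) \<le> e / 4" "dist (avgT \<Lambda> g U a) (L a) < e / 4"
      using approx[OF a] r[OF _ a] by auto
    then show "dist (avgT \<Lambda> P T a) (avgT \<Lambda> P U a) \<le> e"
      using dist_triangle[of "avgT \<Lambda> P T a" "avgT \<Lambda> P U a" "avgT \<Lambda> g T a"]
        dist_triangle[of "avgT \<Lambda> g T a" "avgT \<Lambda> P U a" "L a"]
        dist_triangle[of "L a" "avgT \<Lambda> P U a" "avgT \<Lambda> g U a"]
      by (simp add: dist_commute)
  qed
qed

theorem lemma3p2:
  fixes \<Lambda> :: "real^'n" and X :: "real \<Rightarrow> real" and P :: "complex^'n \<Rightarrow> complex^'n"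
  assumes "\<forall>i. \<Lambda> $ i \<noteq> 0"
    and "mono_on {0..} X" and "continuous_on {0..} X" and "\<forall>R\<ge>0. X R \<ge> 0"
    and "P \<in> LipX X"
  shows "\<exists>Pbar. (\<forall>a. ((\<lambda>T. avgT \<Lambda> P T a) \<longlongrightarrow> Pbar a) at_top)
            \<and> (\<forall>a. ((\<lambda>T. avgT \<Lambda> P T a) \<longlongrightarrow> Pbar a) at_bot)
            \<and> Pbar \<in> LipX X
            \<and> (\<forall>R>0. uniform_limit (cball 0 R) (\<lambda>T. avgT \<Lambda> P T) Pbar at_top
                    \<and> uniform_limit (cball 0 R) (\<lambda>T. avgT \<Lambda> P T) Pbar at_bot)"
proof -
  have cP: "continuous_on UNIV P"
    using assms(5) by (simp add: LipX_def)
  define Pbar where "Pbar a = lim (\<lambda>n. avgT \<Lambda> P (real n) a)" for a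
  have unif: "uniform_limit (cball 0 R) (avgT \<Lambda> P) Pbar at_infinity" for R
    unfolding Pbar_def by (rule uniform_limit_at_infinity_if_Cauchy[OF avgT_uniformly_Cauchy[OF cP]])
  have lim: "((\<lambda>T. avgT \<Lambda> P T a) \<longlongrightarrow> Pbar a) at_infinity" for a
    using uniform_limit_on_subset[OF unif[of "norm a"], of "{a}"] by simp
  have "\<forall>\<^sub>F T in at_infinity. avgT \<Lambda> P T \<in> LipX X"
    using avgT_LipX[OF assms(5)] by (intro eventually_at_infinityI[of 1]) auto
  then have "Pbar \<in> LipX X"
    by (rule LipX_tendsto[OF trivial_limit_at_infinity _ lim])
  then show ?thesis
    using tendsto_mono[OF at_top_le_at_infinity lim] tendsto_mono[OF at_bot_le_at_infinity lim]
      filterlim_mono[OF unif order_refl at_top_le_at_infinity]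
      filterlim_mono[OF unif order_refl at_bot_le_at_infinity]
    by blast
qed

end
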